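(* There is an absolute constant $C>0$ such that for every positive integer $d$ and all $\alpha,\beta\in[0,1]$ with $\alpha>\beta$, the $(\alpha,\beta,d,\ell)$-InnerProduct problem can be solved with space \[ \ell \le d\log_2\!\left(\frac{\sqrt{1-\beta}}{\alpha-\beta}\right)+C d . \]
   Context: $\mathbb{S}^{d-1}$ denotes the Euclidean unit sphere in $\mathbb{R}^d$, and $\langle x,y\rangle=\sum_{i=1}^d x_iy_i$. For positive integers $d,\ell$ and $\alpha,\beta\in[0,1]$ with $\alpha>\beta$, the $(\alpha,\beta,d,\ell)$-InnerProduct problem is to construct maps $\mathcal{E}:\mathbb{S}^{d-1}\to\{0,1\}^\ell$ and $\mathcal{D}:\{0,1\}^\ell\to\mathbb{S}^{d-1}$ and a threshold $t\in\mathbb{R}$ such that for all $x,y\in\mathbb{S}^{d-1}$: - if $\langle x,y\rangle\ge\alpha$ then $\langle \mathcal{D}(\mathcal{E}(x)),\mathcal{D}(\mathcal{E}(y))\rangle\ge t$; - if $\langle x,y\rangle\le\beta$ then $\langle \mathcal{D}(\mathcal{E}(x)),\mathcal{D}(\mathcal{E}(y))\rangle< t$. The problem is solved with space $\ell$ if such $\mathcal{E},\mathcal{D},t$ exist. *)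

theory Defs
  imports "HOL-Analysis.Analysis"
begin

text \<open>Vectors in R^d are real lists of length d (d varies inside the statement).\<close>

definition ip :: "real list \<Rightarrow> real list \<Rightarrow> real" where
  "ip x y = (\<Sum>i<length x. x ! i * y ! i)"

definition unit_sphere :: "nat \<Rightarrow> real list set" where
  "unit_sphere d = {x. length x = d \<and> ip x x = 1}"

definition bitstrings :: "nat \<Rightarrow> bool list set" where
  "bitstrings l = {b. length b = l}"

definition inner_product_solvable :: "real \<Rightarrow> real \<Rightarrow> nat \<Rightarrow> nat \<Rightarrow> bool" where
  "inner_product_solvable \<alpha> \<beta> d l \<longleftrightarrow>
     (\<exists>(E :: real list \<Rightarrow> bool list) (D :: bool list \<Rightarrow> real list) (t :: real).
        (\<forall>x\<in>unit_sphere d. E x \<in> bitstrings l) \<and>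
        (\<forall>b\<in>bitstrings l. D b \<in> unit_sphere d) \<and>
        (\<forall>x\<in>unit_sphere d. \<forall>y\<in>unit_sphere d.
           (ip x y \<ge> \<alpha> \<longrightarrow> ip (D (E x)) (D (E y)) \<ge> t) \<and>
           (ip x y \<le> \<beta> \<longrightarrow> ip (D (E x)) (D (E y)) < t)))"

end

theory Submission
  imports Defs
begin

text \<open>Quantise the sphere: send each point to a nearby point of a finite \<delta>-net and transmit the
index of that net point. On the sphere <x,y> = 1 - |x - y|^2/2, so the thresholds \<alpha> and
\<beta> become distances a = sqrt (2 - 2\<alpha>) < b = sqrt (2 - 2\<beta>); moving both points by at most
\<delta> < (b - a)/4 changes their distance by less than (b - a)/2, hence the threshold taken at
distance (a + b)/2 still separates the two cases. Normalised integer vectors of l1-norm at most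
d/\<delta> + d form such a net with at most (6e/\<delta>)^d points, so d log2 (6e/\<delta>) + 1 bits suffice.
Finally, b - a \<ge> (\<alpha> - \<beta>)/b and b = sqrt 2 sqrt (1 - \<beta>), so with \<delta> = (b - a)/5 the
bit count is d log2 (sqrt (1 - \<beta>)/(\<alpha> - \<beta>)) + O(d).\<close>

definition euclid_dist :: "nat \<Rightarrow> real list \<Rightarrow> real list \<Rightarrow> real" where
  "euclid_dist d x y = L2_set (\<lambda>i. x!i - y!i) {..<d}"

lemma L2_set_diff_triangle:
  "L2_set (\<lambda>i. f i - h i) A \<le> L2_set (\<lambda>i. f i - g i) A + L2_set (\<lambda>i. g i - h i) A"
  using L2_set_triangle_ineq[of "\<lambda>i. f i - g i" "\<lambda>i. g i - h i" A] by simp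

lemma L2_set_diff_commute: "L2_set (\<lambda>i. f i - g i) A = L2_set (\<lambda>i. g i - f i) A"
  unfolding L2_set_def by (simp add: power2_commute)

lemma abs_L2_set_diff_le: "\<bar>L2_set f A - L2_set g A\<bar> \<le> L2_set (\<lambda>i. f i - g i) A"
  using L2_set_triangle_ineq[of "\<lambda>i. f i - g i" g A] L2_set_triangle_ineq[of "\<lambda>i. g i - f i" f A]
    L2_set_diff_commute[of f g A] by simp

lemma euclid_dist_triangle: "euclid_dist d x z \<le> euclid_dist d x y + euclid_dist d y z"
  unfolding euclid_dist_def by (rule L2_set_diff_triangle)

lemma euclid_dist_commute: "euclid_dist d x y = euclid_dist d y x"
  unfolding euclid_dist_def by (rule L2_set_diff_commute)

lemma euclid_dist_nonneg: "0 \<le> euclid_dist d x y"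
  unfolding euclid_dist_def by simp

lemma euclid_dist_perturb:
  "euclid_dist d x' y' \<le> euclid_dist d x y + euclid_dist d x x' + euclid_dist d y y'"
  using euclid_dist_triangle[of d x' y' x] euclid_dist_triangle[of d x y' y]
    euclid_dist_commute[of d x' x] by linarith

lemma unit_sphereD:
  assumes "x \<in> unit_sphere d"
  shows "length x = d" "L2_set (\<lambda>i. x!i) {..<d} = 1"
  using assms by (auto simp: unit_sphere_def ip_def L2_set_def power2_eq_square)

lemma ip_eq_euclid_dist:
  assumes "x \<in> unit_sphere d" "y \<in> unit_sphere d"
  shows "ip x y = 1 - (euclid_dist d x y)\<^sup>2 / 2"
proof -
  have lx: "length x = d" and sx: "(\<Sum>i<d. x!i * x!i) = 1" and sy: "(\<Sum>i<d. y!i * y!i) = 1"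
    using assms by (auto simp: unit_sphere_def ip_def)
  have "(euclid_dist d x y)\<^sup>2 = (\<Sum>i<d. (x!i - y!i)\<^sup>2)"
    unfolding euclid_dist_def L2_set_def by (simp add: sum_nonneg)
  also have "\<dots> = (\<Sum>i<d. x!i * x!i + y!i * y!i - 2 * (x!i * y!i))"
    by (rule sum.cong) (auto simp: power2_eq_square algebra_simps)
  also have "\<dots> = 2 - 2 * ip x y"
    using sx sy lx by (simp add: ip_def sum.distrib sum_subtractf sum_distrib_left)
  finally show ?thesis by (simp add: field_simps)
qed

lemma euclid_dist_eq_sqrt_ip:
  assumes "x \<in> unit_sphere d" "y \<in> unit_sphere d"
  shows "euclid_dist d x y = sqrt (2 - 2 * ip x y)"
  using ip_eq_euclid_dist[OF assms] euclid_dist_nonneg[of d x y] by simp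

lemma threshold_separates_perturbed:
  fixes \<alpha> \<beta> \<delta> :: real
  defines "a \<equiv> sqrt (2 - 2*\<alpha>)" and "b \<equiv> sqrt (2 - 2*\<beta>)"
  assumes "\<alpha> \<le> 1" and gap: "4 * \<delta> < b - a"
    and S: "x \<in> unit_sphere d" "y \<in> unit_sphere d" "x' \<in> unit_sphere d" "y' \<in> unit_sphere d"
    and close: "euclid_dist d x x' \<le> \<delta>" "euclid_dist d y y' \<le> \<delta>"
  shows "\<alpha> \<le> ip x y \<Longrightarrow> 1 - ((a+b)/2)\<^sup>2/2 \<le> ip x' y'"
    and "ip x y \<le> \<beta> \<Longrightarrow> ip x' y' < 1 - ((a+b)/2)\<^sup>2/2"
proof -
  have "0 \<le> a" unfolding a_def using \<open>\<alpha> \<le> 1\<close> by simp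
  have "0 \<le> \<delta>" using close euclid_dist_nonneg[of d x x'] by linarith
  have upper: "euclid_dist d x' y' \<le> euclid_dist d x y + 2*\<delta>"
    using euclid_dist_perturb[of d x' y' x y] close by linarith
  have lower: "euclid_dist d x y \<le> euclid_dist d x' y' + 2*\<delta>"
    using euclid_dist_perturb[of d x y x' y'] close euclid_dist_commute[of d x x']
      euclid_dist_commute[of d y y'] by linarith
  note ip' = ip_eq_euclid_dist[OF S(3,4)]
  note dist = euclid_dist_eq_sqrt_ip[OF S(1,2)]
  show "1 - ((a+b)/2)\<^sup>2/2 \<le> ip x' y'" if "\<alpha> \<le> ip x y"
  proof -
    have "euclid_dist d x y \<le> a" unfolding dist a_def using that by simp
    then have "euclid_dist d x' y' \<le> (a+b)/2" using upper gap by (simp add: field_simps)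
    then have "(euclid_dist d x' y')\<^sup>2 \<le> ((a+b)/2)\<^sup>2"
      using euclid_dist_nonneg power_mono by blast
    then show ?thesis unfolding ip' by simp
  qed
  show "ip x' y' < 1 - ((a+b)/2)\<^sup>2/2" if "ip x y \<le> \<beta>"
  proof -
    have "b \<le> euclid_dist d x y" unfolding dist b_def using that by simp
    then have "(a+b)/2 < euclid_dist d x' y'" using lower gap by (simp add: field_simps)
    then have "((a+b)/2)\<^sup>2 < (euclid_dist d x' y')\<^sup>2"
      using \<open>0 \<le> a\<close> \<open>0 \<le> \<delta>\<close> gap by (intro power_strict_mono) auto
    then show ?thesis unfolding ip' by simp
  qed
qed

lemma unit_vector_in_unit_sphere:
  assumes "d \<ge> 1" shows "(1 # replicate (d - 1) 0) \<in> unit_sphere d"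
proof -
  obtain k where k: "d = Suc k" using assms by (cases d) auto
  have "(\<Sum>i<Suc k. (1 # replicate k 0) ! i * (1 # replicate k (0::real)) ! i) = 1"
    by (subst sum.lessThan_Suc_shift) simp
  then show ?thesis using k by (simp add: unit_sphere_def ip_def)
qed

lemma bitstrings_finite_card: "finite (bitstrings l)" "card (bitstrings l) = 2^l"
proof -
  have B: "bitstrings l = {xs. set xs \<subseteq> (UNIV::bool set) \<and> length xs = l}"
    by (simp add: bitstrings_def)
  show "finite (bitstrings l)" unfolding B by (rule finite_lists_length_eq) simp
  show "card (bitstrings l) = 2^l" unfolding B card_lists_length_eq[of "UNIV::bool set", OF finite] by simp
qed

lemma inner_product_solvable_from_net:
  fixes F :: "real list \<Rightarrow> real list"
  assumes "\<alpha> \<le> 1" and gap: "4 * \<delta> < sqrt (2 - 2*\<beta>) - sqrt (2 - 2*\<alpha>)" and "d \<ge> 1"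
    and F: "\<And>x. x \<in> unit_sphere d \<Longrightarrow> F x \<in> unit_sphere d \<and> euclid_dist d x (F x) \<le> \<delta>"
    and fin: "finite (F ` unit_sphere d)" and card: "card (F ` unit_sphere d) \<le> 2^l"
  shows "inner_product_solvable \<alpha> \<beta> d l"
proof -
  define Q where "Q = F ` unit_sphere d"
  obtain g where g: "g ` Q \<subseteq> bitstrings l" "inj_on g Q"
    using card_le_inj[of Q "bitstrings l"] fin card bitstrings_finite_card unfolding Q_def by auto
  define x0 where "x0 = F (1 # replicate (d - 1) 0)"
  have "x0 \<in> unit_sphere d" unfolding x0_def using F unit_vector_in_unit_sphere[OF \<open>d \<ge> 1\<close>] by blast
  define E where "E = (\<lambda>x. g (F x))"
  define D where "D = (\<lambda>c. if c \<in> g ` Q then inv_into Q g c else x0)"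
  define t where "t = 1 - ((sqrt (2 - 2*\<alpha>) + sqrt (2 - 2*\<beta>))/2)\<^sup>2/2"
  have DE: "D (E x) = F x" if "x \<in> unit_sphere d" for x
  proof -
    have "F x \<in> Q" unfolding Q_def using that by blast
    then show ?thesis unfolding D_def E_def using g(2) by (simp add: inv_into_f_f)
  qed
  have D: "D c \<in> unit_sphere d" for c
  proof (cases "c \<in> g ` Q")
    case True
    then have "inv_into Q g c \<in> Q" by (rule inv_into_into)
    then show ?thesis using True F unfolding D_def Q_def by auto
  qed (simp add: D_def \<open>x0 \<in> unit_sphere d\<close>)
  show ?thesis
    unfolding inner_product_solvable_def
  proof (intro exI[of _ E] exI[of _ D] exI[of _ t] conjI ballI impI)
    fix x assume "x \<in> unit_sphere d"
    then show "E x \<in> bitstrings l" using g(1) unfolding E_def Q_def by auto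
  next
    fix x y assume x: "x \<in> unit_sphere d" and y: "y \<in> unit_sphere d"
    note sep = threshold_separates_perturbed[OF \<open>\<alpha> \<le> 1\<close> gap x y, of "F x" "F y"]
    show "t \<le> ip (D (E x)) (D (E y))" if "\<alpha> \<le> ip x y"
      unfolding DE[OF x] DE[OF y] t_def using sep(1) F x y that by auto
    show "ip (D (E x)) (D (E y)) < t" if "ip x y \<le> \<beta>"
      unfolding DE[OF x] DE[OF y] t_def using sep(2) F x y that by auto
  qed (use D in auto)
qed

definition normalize_list :: "real list \<Rightarrow> real list" where
  "normalize_list w = map (\<lambda>v. v / L2_set (\<lambda>i. w!i) {..<length w}) w"

lemma normalize_list_in_unit_sphere:
  assumes "length w = d" "L2_set (\<lambda>i. w!i) {..<d} \<noteq> 0"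
  shows "normalize_list w \<in> unit_sphere d"
proof -
  define L where "L = L2_set (\<lambda>i. w!i) {..<d}"
  have L2: "L\<^sup>2 = (\<Sum>i<d. (w!i)\<^sup>2)" unfolding L_def L2_set_def by (simp add: sum_nonneg)
  have "ip (normalize_list w) (normalize_list w) = (\<Sum>i<d. (w!i)\<^sup>2) / L\<^sup>2"
    using assms(1) unfolding ip_def normalize_list_def L_def
    by (simp add: sum_divide_distrib power2_eq_square)
  also have "\<dots> = 1" using assms(2) by (simp add: L_def flip: L2)
  finally show ?thesis using assms(1) by (simp add: unit_sphere_def normalize_list_def)
qed

lemma L2_set_scale: "L2_set (\<lambda>i. c * f i) A = \<bar>c\<bar> * L2_set f A"
proof -
  have "L2_set (\<lambda>i. c * f i) A = L2_set (\<lambda>i. \<bar>c\<bar> * f i) A"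
    unfolding L2_set_def by (simp add: power_mult_distrib)
  also have "\<dots> = \<bar>c\<bar> * L2_set f A" by (simp add: L2_set_right_distrib)
  finally show ?thesis .
qed

lemma L2_set_normalize_close:
  assumes x: "L2_set x A = 1" and "0 < c"
    and close: "L2_set (\<lambda>i. x i - r i / c) A \<le> \<epsilon>" and "\<epsilon> < 1"
  shows "0 < L2_set r A" and "L2_set (\<lambda>i. x i - r i / L2_set r A) A \<le> 2 * \<epsilon>"
proof -
  define L where "L = L2_set r A"
  have "L2_set (\<lambda>i. r i / c) A = L / c"
    using L2_set_scale[of "1/c" r A] \<open>0 < c\<close> by (simp add: L_def)
  then have dev: "\<bar>L / c - 1\<bar> \<le> \<epsilon>"
    using abs_L2_set_diff_le[of "\<lambda>i. r i / c" A x] L2_set_diff_commute[of x "\<lambda>i. r i / c" A] x close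
    by simp
  then have "0 < L / c" using \<open>\<epsilon> < 1\<close> by linarith
  then have "0 < L" using \<open>0 < c\<close> by (simp add: zero_less_divide_iff)
  then show "0 < L2_set r A" by (simp add: L_def)
  have "L2_set (\<lambda>i. r i / c - r i / L) A = L2_set (\<lambda>i. (1/c - 1/L) * r i) A"
    by (simp add: algebra_simps)
  also have "\<dots> = \<bar>L / c - 1\<bar>"
    using \<open>0 < L\<close> unfolding L2_set_scale L_def[symmetric]
    by (simp add: abs_mult_pos' field_simps flip: abs_mult)
  finally have "L2_set (\<lambda>i. r i / c - r i / L) A \<le> \<epsilon>" using dev by simp
  then show "L2_set (\<lambda>i. x i - r i / L2_set r A) A \<le> 2 * \<epsilon>"
    using L2_set_diff_triangle[of x "\<lambda>i. r i / L" A "\<lambda>i. r i / c"] close unfolding L_def by simp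
qed

lemma L2_set_round_error:
  assumes "0 < N"
  shows "L2_set (\<lambda>i. x i - of_int (round (N * x i)) / N) A \<le> sqrt (card A) / (2 * N)"
proof -
  have err: "\<bar>x i - of_int (round (N * x i)) / N\<bar> \<le> 1 / (2 * N)" for i
  proof -
    have "\<bar>of_int (round (N * x i)) - N * x i\<bar> \<le> 1/2" by (rule of_int_round_abs_le)
    then show ?thesis using \<open>0 < N\<close> by (simp add: field_simps abs_minus_commute)
  qed
  have "L2_set (\<lambda>i. x i - of_int (round (N * x i)) / N) A
      = L2_set (\<lambda>i. \<bar>x i - of_int (round (N * x i)) / N\<bar>) A"
    unfolding L2_set_def by simp
  also have "\<dots> \<le> L2_set (\<lambda>i. 1 / (2 * N)) A" by (rule L2_set_mono) (use err in auto)
  also have "\<dots> = sqrt (card A) / (2 * N)" using \<open>0 < N\<close> by (simp add: L2_set_constant)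
  finally show ?thesis .
qed

lemma sum_abs_round_le:
  assumes "0 < N" and x: "L2_set x A = 1"
  shows "(\<Sum>i\<in>A. \<bar>of_int (round (N * x i))\<bar>) \<le> N * sqrt (card A) + card A / 2"
proof -
  have "\<bar>of_int (round (N * x i))\<bar> \<le> N * \<bar>x i\<bar> + 1/2" for i :: 'a
  proof -
    have "\<bar>of_int (round (N * x i)) - N * x i\<bar> \<le> 1/2" by (rule of_int_round_abs_le)
    moreover have "\<bar>N * x i\<bar> = N * \<bar>x i\<bar>" using \<open>0 < N\<close> by (simp add: abs_mult)
    ultimately show ?thesis by linarith
  qed
  then have "(\<Sum>i\<in>A. \<bar>of_int (round (N * x i))\<bar>) \<le> (\<Sum>i\<in>A. N * \<bar>x i\<bar> + 1/2)"
    by (rule sum_mono)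
  also have "\<dots> = N * (\<Sum>i\<in>A. \<bar>x i\<bar> * \<bar>1\<bar>) + card A / 2"
    by (simp add: sum.distrib sum_distrib_left)
  also have "\<dots> \<le> N * sqrt (card A) + card A / 2"
    using L2_set_mult_ineq[of x "\<lambda>i. 1" A] x \<open>0 < N\<close> by (simp add: L2_set_constant)
  finally show ?thesis .
qed

definition bounded_int_lists :: "nat \<Rightarrow> nat \<Rightarrow> int list set" where
  "bounded_int_lists d M = {z. length z = d \<and> (\<Sum>i<d. nat \<bar>z!i\<bar>) \<le> M}"

lemma sphere_net_point:
  assumes x: "x \<in> unit_sphere d" and "d \<ge> 1" "0 < \<delta>" "\<delta> \<le> 1"
  defines "z \<equiv> map (\<lambda>v. round (sqrt d / \<delta> * v)) x"
  shows "normalize_list (map of_int z) \<in> unit_sphere d"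
    and "euclid_dist d x (normalize_list (map of_int z)) \<le> \<delta>"
    and "z \<in> bounded_int_lists d (nat \<lfloor>d / \<delta> + d\<rfloor>)"
proof -
  define N where "N = sqrt d / \<delta>"
  define r where "r = (\<lambda>i. real_of_int (z!i))"
  have "length x = d" and x1: "L2_set (\<lambda>i. x!i) {..<d} = 1" using unit_sphereD[OF x] by auto
  then have lz: "length z = d" and r: "\<And>i. i < d \<Longrightarrow> r i = of_int (round (N * x!i))"
    by (auto simp: z_def r_def N_def)
  have "0 < N" using assms by (simp add: N_def)
  have "L2_set (\<lambda>i. x!i - r i / N) {..<d} = L2_set (\<lambda>i. x!i - of_int (round (N * x!i)) / N) {..<d}"
    by (rule L2_set_cong) (simp_all add: r)
  also have "\<dots> \<le> \<delta> / 2"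
    using L2_set_round_error[OF \<open>0 < N\<close>, of "\<lambda>i. x!i" "{..<d}"] assms by (simp add: N_def)
  finally have close: "L2_set (\<lambda>i. x!i - r i / N) {..<d} \<le> \<delta> / 2" .
  have "\<delta> / 2 < 1" using \<open>\<delta> \<le> 1\<close> by simp
  note normalized = L2_set_normalize_close[OF x1 \<open>0 < N\<close> close this]
  have L2r: "L2_set (\<lambda>i. map of_int z ! i) {..<d} = L2_set r {..<d}"
    by (rule L2_set_cong) (simp_all add: lz r_def)
  then have entries: "\<And>i. i < d \<Longrightarrow> normalize_list (map of_int z) ! i = r i / L2_set r {..<d}"
    by (simp add: normalize_list_def lz r_def)
  show "normalize_list (map of_int z) \<in> unit_sphere d"
    using normalized(1) L2r lz by (intro normalize_list_in_unit_sphere) simp_all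
  have "euclid_dist d x (normalize_list (map of_int z)) = L2_set (\<lambda>i. x!i - r i / L2_set r {..<d}) {..<d}"
    unfolding euclid_dist_def by (rule L2_set_cong) (simp_all add: entries)
  then show "euclid_dist d x (normalize_list (map of_int z)) \<le> \<delta>"
    using normalized(2) by simp
  have "real (\<Sum>i<d. nat \<bar>z!i\<bar>) = (\<Sum>i<d. \<bar>of_int (round (N * x!i))\<bar>)"
    by (simp add: r_def flip: r)
  also have "\<dots> \<le> N * sqrt d + d / 2"
    using sum_abs_round_le[OF \<open>0 < N\<close> x1] by simp
  also have "\<dots> \<le> d / \<delta> + d" by (simp add: N_def)
  finally have "(\<Sum>i<d. nat \<bar>z!i\<bar>) \<le> nat \<lfloor>d / \<delta> + d\<rfloor>" by (rule le_nat_floor)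
  then show "z \<in> bounded_int_lists d (nat \<lfloor>d / \<delta> + d\<rfloor>)"
    unfolding bounded_int_lists_def using lz by simp
qed

lemma card_bounded_int_lists:
  shows "finite (bounded_int_lists d M)" and "card (bounded_int_lists d M) \<le> ((M + d) choose M) * 2^d"
proof -
  let ?A = "{l::nat list. size l = d + 1 \<and> sum_list l = M}"
  let ?B = "{b::bool list. set b \<subseteq> UNIV \<and> length b = d}"
  \<comment> \<open>absolute values padded by the slack up to M, together with the signs\<close>
  define \<phi> where "\<phi> = (\<lambda>z::int list. (map (\<lambda>v. nat \<bar>v\<bar>) z @ [M - sum_list (map (\<lambda>v. nat \<bar>v\<bar>) z)],
                                 map (\<lambda>v. v < 0) z))"
  have cA: "card ?A = (M + d) choose M" using card_length_sum_list[of "d+1" M] by simp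
  have fA: "finite ?A" using cA by (intro card_ge_0_finite) simp
  have cB: "card ?B = 2^d" using card_lists_length_eq[of "UNIV::bool set" d] by simp
  have fB: "finite ?B" by (rule finite_lists_length_eq) simp
  have sl: "sum_list (map (\<lambda>v. nat \<bar>v\<bar>) z) = (\<Sum>i<d. nat \<bar>z!i\<bar>)" if "length z = d" for z :: "int list"
    using that by (simp add: sum_list_sum_nth atLeast0LessThan)
  have img: "\<phi> ` bounded_int_lists d M \<subseteq> ?A \<times> ?B"
  proof
    fix p assume "p \<in> \<phi> ` bounded_int_lists d M"
    then obtain z where z: "length z = d" "(\<Sum>i<d. nat \<bar>z!i\<bar>) \<le> M" and p: "p = \<phi> z"
      by (auto simp: bounded_int_lists_def)
    show "p \<in> ?A \<times> ?B" using z sl[OF z(1)] unfolding p \<phi>_def by auto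
  qed
  have inj: "inj_on \<phi> (bounded_int_lists d M)"
  proof
    fix z z' assume "z \<in> bounded_int_lists d M" "z' \<in> bounded_int_lists d M" and e: "\<phi> z = \<phi> z'"
    then have lz: "length z = d" "length z' = d" by (auto simp: bounded_int_lists_def)
    from e have e1: "map (\<lambda>v. nat \<bar>v\<bar>) z = map (\<lambda>v. nat \<bar>v\<bar>) z'"
      and e2: "map (\<lambda>v. v < 0) z = map (\<lambda>v. v < 0) z'"
      unfolding \<phi>_def using lz by auto
    show "z = z'"
    proof (rule nth_equalityI)
      show "length z = length z'" using lz by simp
      fix i assume "i < length z"
      then have "nat \<bar>z!i\<bar> = nat \<bar>z'!i\<bar>" "(z!i < 0) = (z'!i < 0)"
        using arg_cong[OF e1, of "\<lambda>l. l!i"] arg_cong[OF e2, of "\<lambda>l. l!i"] lz by auto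
      then show "z!i = z'!i" by linarith
    qed
  qed
  moreover have fin: "finite (?A \<times> ?B)" using fA fB by simp
  ultimately have "card (bounded_int_lists d M) \<le> card (?A \<times> ?B)"
    using card_inj_on_le img by blast
  then show "card (bounded_int_lists d M) \<le> ((M + d) choose M) * 2^d"
    using cA cB by (simp add: card_cartesian_product)
  show "finite (bounded_int_lists d M)"
    using finite_imageD[OF finite_subset[OF img fin]] inj .
qed

lemma power_div_fact_le_exp: "real d ^ d / fact d \<le> exp (real d)"
proof -
  have "real d ^ d / fact d \<le> (\<Sum>n\<in>{..d}. real d ^ n / fact n)"
    by (rule member_le_sum) auto
  also have "\<dots> \<le> exp (real d)"
    using summable_exp_generic[of "real d"]
    by (auto simp: exp_def divide_inverse ac_simps intro!: sum_le_suminf)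
  finally show ?thesis .
qed

lemma binomial_le_exp_power:
  assumes "d \<ge> 1"
  shows "real ((M + d) choose M) \<le> (exp 1 * (real M + real d) / real d) ^ d"
proof -
  have "real ((M + d) choose d) * fact d \<le> real (M + d) ^ d"
    using binomial_fact_pow[of "M + d" d] by (metis of_nat_fact of_nat_le_iff of_nat_mult of_nat_power)
  then have "real ((M + d) choose M) \<le> real (M + d) ^ d / fact d"
    by (simp add: field_simps binomial_symmetric[of d "M + d"])
  also have "\<dots> = (real (M + d) / real d) ^ d * (real d ^ d / fact d)"
    using assms by (simp add: field_simps power_divide)
  also have "\<dots> \<le> (real (M + d) / real d) ^ d * exp (real d)"
    by (rule mult_left_mono[OF power_div_fact_le_exp]) simp
  also have "exp (real d) = exp 1 ^ d" by (simp flip: exp_of_nat_mult)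
  also have "(real (M + d) / real d) ^ d * exp 1 ^ d = (exp 1 * (real M + real d) / real d) ^ d"
    by (simp add: power_mult_distrib[symmetric] field_simps)
  finally show ?thesis .
qed

lemma card_bounded_int_lists_le:
  assumes "d \<ge> 1" "0 < \<delta>" "\<delta> \<le> 1"
  shows "real (card (bounded_int_lists d (nat \<lfloor>d / \<delta> + d\<rfloor>))) \<le> (6 * exp 1 / \<delta>) ^ d"
proof -
  define M where "M = nat \<lfloor>d / \<delta> + d\<rfloor>"
  have "real M \<le> d / \<delta> + d" unfolding M_def by (rule of_nat_floor) (use assms in auto)
  then have "exp 1 * (real M + real d) / real d \<le> exp 1 * (d / \<delta> + 2 * d) / d"
    using assms by (intro divide_right_mono mult_left_mono) auto
  also have "\<dots> = exp 1 * (1 / \<delta> + 2)" using assms by (simp add: field_simps)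
  also have "\<dots> \<le> 3 * exp 1 / \<delta>" using assms by (simp add: field_simps)
  finally have base: "exp 1 * (real M + real d) / real d \<le> 3 * exp 1 / \<delta>" .
  have "real ((M + d) choose M) \<le> (exp 1 * (real M + real d) / real d) ^ d"
    by (rule binomial_le_exp_power[OF assms(1)])
  also have "\<dots> \<le> (3 * exp 1 / \<delta>) ^ d" by (rule power_mono[OF base]) simp
  finally have "real ((M + d) choose M) * 2^d \<le> (3 * exp 1 / \<delta>) ^ d * 2^d" by simp
  also have "\<dots> = (6 * exp 1 / \<delta>) ^ d" by (simp flip: power_mult_distrib)
  finally have "real ((M + d) choose M) * 2^d \<le> (6 * exp 1 / \<delta>) ^ d" .
  moreover have "real (card (bounded_int_lists d M)) \<le> real ((M + d) choose M) * 2^d"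
    using card_bounded_int_lists(2)[of d M] by (metis of_nat_le_iff of_nat_mult of_nat_numeral of_nat_power)
  ultimately show ?thesis unfolding M_def by linarith
qed

lemma sphere_net_exists:
  assumes "d \<ge> 1" "0 < \<delta>" "\<delta> \<le> 1"
  obtains F where "\<And>x. x \<in> unit_sphere d \<Longrightarrow> F x \<in> unit_sphere d \<and> euclid_dist d x (F x) \<le> \<delta>"
    and "finite (F ` unit_sphere d)" and "real (card (F ` unit_sphere d)) \<le> (6 * exp 1 / \<delta>) ^ d"
proof
  define Z where "Z = bounded_int_lists d (nat \<lfloor>d / \<delta> + d\<rfloor>)"
  define G where "G = (\<lambda>z. normalize_list (map of_int z))"
  define F where "F = (\<lambda>x. G (map (\<lambda>v. round (sqrt d / \<delta> * v)) x))"
  show "F x \<in> unit_sphere d \<and> euclid_dist d x (F x) \<le> \<delta>" if "x \<in> unit_sphere d" for x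
    using sphere_net_point(1,2)[OF that assms] unfolding F_def G_def by simp
  have sub: "F ` unit_sphere d \<subseteq> G ` Z"
  proof (rule image_subsetI)
    fix x assume "x \<in> unit_sphere d"
    then show "F x \<in> G ` Z" unfolding F_def Z_def by (rule imageI[OF sphere_net_point(3)[OF _ assms]])
  qed
  have "finite Z" unfolding Z_def by (rule card_bounded_int_lists(1))
  then show "finite (F ` unit_sphere d)" using finite_subset[OF sub] by blast
  have "card (F ` unit_sphere d) \<le> card (G ` Z)" by (rule card_mono[OF _ sub]) (use \<open>finite Z\<close> in simp)
  also have "\<dots> \<le> card Z" by (rule card_image_le[OF \<open>finite Z\<close>])
  finally have "real (card (F ` unit_sphere d)) \<le> real (card Z)" by simp
  then show "real (card (F ` unit_sphere d)) \<le> (6 * exp 1 / \<delta>) ^ d"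
    using card_bounded_int_lists_le[OF assms] unfolding Z_def by linarith
qed

lemma sqrt_gap_ge:
  fixes \<alpha> \<beta> :: real
  assumes "\<beta> < \<alpha>" "\<alpha> \<le> 1"
  shows "\<alpha> - \<beta> \<le> sqrt (2 - 2*\<beta>) * (sqrt (2 - 2*\<beta>) - sqrt (2 - 2*\<alpha>))"
proof -
  define a b where "a = sqrt (2 - 2*\<alpha>)" and "b = sqrt (2 - 2*\<beta>)"
  have "0 \<le> a" "a \<le> b" using assms by (auto simp: a_def b_def)
  have "2 * (\<alpha> - \<beta>) = (b - a) * (b + a)"
    using assms by (simp add: a_def b_def algebra_simps flip: power2_eq_square)
  also have "\<dots> \<le> (b - a) * (2 * b)"
    using \<open>0 \<le> a\<close> \<open>a \<le> b\<close> by (intro mult_left_mono) auto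
  finally show ?thesis by (simp add: a_def b_def algebra_simps)
qed

lemma sqrt_gap_bounds:
  fixes \<alpha> \<beta> :: real
  assumes "0 \<le> \<beta>" "\<beta> < \<alpha>" "\<alpha> \<le> 1"
  defines "\<delta> \<equiv> (sqrt (2 - 2*\<beta>) - sqrt (2 - 2*\<alpha>)) / 5"
  shows "0 < \<delta>" and "\<delta> \<le> 1"
    and "log 2 (6 * exp 1 / \<delta>) \<le> 8 + log 2 (sqrt (1 - \<beta>) / (\<alpha> - \<beta>))"
proof -
  define b where "b = sqrt (2 - 2*\<beta>)"
  have b: "b = sqrt 2 * sqrt (1 - \<beta>)" unfolding b_def by (simp flip: real_sqrt_mult)
  have "sqrt 2 \<le> (3/2 :: real)" by (rule real_le_lsqrt) (auto simp: power2_eq_square)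
  moreover have "b \<le> sqrt 2" unfolding b using assms by (intro mult_right_le_one_le) simp_all
  ultimately have "b \<le> 3/2" by linarith
  show "0 < \<delta>" unfolding \<delta>_def using assms by simp
  have "0 \<le> sqrt (2 - 2*\<alpha>)" using assms by simp
  then have "sqrt (2 - 2*\<beta>) - sqrt (2 - 2*\<alpha>) \<le> 5" using \<open>b \<le> 3/2\<close> unfolding b_def by linarith
  then show "\<delta> \<le> 1" unfolding \<delta>_def by simp
  define R where "R = sqrt (1 - \<beta>) / (\<alpha> - \<beta>)"
  have "0 < R" unfolding R_def using assms by simp
  have "5 * \<delta> = b - sqrt (2 - 2*\<alpha>)" unfolding \<delta>_def b_def by simp
  then have "\<alpha> - \<beta> \<le> b * (5 * \<delta>)" using sqrt_gap_ge[OF assms(2,3)] by (simp only: b_def)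
  then have "1 / \<delta> \<le> 5 * b / (\<alpha> - \<beta>)"
    using \<open>0 < \<delta>\<close> assms by (simp add: field_simps)
  also have "\<dots> = 5 * sqrt 2 * R" unfolding b R_def by simp
  also have "\<dots> \<le> 5 * (3/2) * R"
    using \<open>sqrt 2 \<le> 3/2\<close> \<open>0 < R\<close> by (intro mult_right_mono) auto
  finally have "6 * exp 1 * (1 / \<delta>) \<le> 6 * exp 1 * (5 * (3/2) * R)" by (rule mult_left_mono) simp
  also have "\<dots> \<le> 6 * 3 * (5 * (3/2) * R)"
    using exp_le \<open>0 < R\<close> by (intro mult_right_mono) auto
  finally have "6 * exp 1 / \<delta> \<le> 2^8 * R" using \<open>0 < R\<close> by simp
  then have "log 2 (6 * exp 1 / \<delta>) \<le> log 2 (2^8 * R)"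
    using \<open>0 < \<delta>\<close> by (intro log_mono) simp_all
  also have "\<dots> = log 2 (2^8) + log 2 R" using \<open>0 < R\<close> by (simp add: log_mult)
  also have "log 2 ((2::real)^8) = 8" by (subst log_nat_power) auto
  finally show "log 2 (6 * exp 1 / \<delta>) \<le> 8 + log 2 (sqrt (1 - \<beta>) / (\<alpha> - \<beta>))"
    unfolding R_def .
qed

lemma exists_bit_length:
  assumes "1 < K" "d \<ge> 1"
  obtains l :: nat where "l \<ge> 1" "K ^ d \<le> 2 ^ l" "real l \<le> real d * log 2 K + 1"
proof
  define l where "l = nat \<lceil>real d * log 2 K\<rceil>"
  have pos: "0 < real d * log 2 K" using assms by simp
  then show "l \<ge> 1" unfolding l_def by linarith
  show "real l \<le> real d * log 2 K + 1"
    unfolding l_def using pos of_int_ceiling_le_add_one[of "real d * log 2 K"] by linarith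
  have "K ^ d = K powr real d" using assms by (simp add: powr_realpow)
  also have "\<dots> = (2 powr log 2 K) powr real d" using assms by simp
  also have "\<dots> = 2 powr (real d * log 2 K)" by (simp add: powr_powr mult.commute)
  also have "\<dots> \<le> 2 powr real l" unfolding l_def by (intro powr_mono) linarith+
  finally show "K ^ d \<le> 2 ^ l" by (simp add: powr_realpow)
qed

theorem mainTheorem1:
  shows "\<exists>C::real. C > 0 \<and>
    (\<forall>(d::nat) (\<alpha>::real) (\<beta>::real). d \<ge> 1 \<longrightarrow> 0 \<le> \<beta> \<longrightarrow> \<beta> < \<alpha> \<longrightarrow> \<alpha> \<le> 1 \<longrightarrow>
       (\<exists>l::nat. l \<ge> 1 \<and> inner_product_solvable \<alpha> \<beta> d l \<and>
          real l \<le> real d * log 2 (sqrt (1 - \<beta>) / (\<alpha> - \<beta>)) + C * real d))"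
proof (rule exI[of _ 9], intro conjI allI impI)
  fix d :: nat and \<alpha> \<beta> :: real
  assume d: "d \<ge> 1" and ab: "0 \<le> \<beta>" "\<beta> < \<alpha>" "\<alpha> \<le> 1"
  define \<delta> where "\<delta> = (sqrt (2 - 2*\<beta>) - sqrt (2 - 2*\<alpha>)) / 5"
  define K where "K = 6 * exp 1 / \<delta>"
  note \<delta> = sqrt_gap_bounds[OF ab, folded \<delta>_def]
  obtain F where F: "\<And>x. x \<in> unit_sphere d \<Longrightarrow> F x \<in> unit_sphere d \<and> euclid_dist d x (F x) \<le> \<delta>"
    and fin: "finite (F ` unit_sphere d)" and card: "real (card (F ` unit_sphere d)) \<le> K ^ d"
    using sphere_net_exists[OF d \<delta>(1,2)] unfolding K_def by blast
  have "1 < K" using \<delta>(1,2) exp_ge_add_one_self[of 1] unfolding K_def by (simp add: field_simps)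
  then obtain l where "l \<ge> 1" "K ^ d \<le> 2 ^ l" and l: "real l \<le> real d * log 2 K + 1"
    using exists_bit_length d by blast
  then have "real (card (F ` unit_sphere d)) \<le> 2 ^ l" using card by linarith
  then have "card (F ` unit_sphere d) \<le> 2 ^ l" by (metis of_nat_le_iff of_nat_numeral of_nat_power)
  moreover have "4 * \<delta> < sqrt (2 - 2*\<beta>) - sqrt (2 - 2*\<alpha>)" using \<delta>(1) unfolding \<delta>_def by simp
  ultimately have "inner_product_solvable \<alpha> \<beta> d l"
    using inner_product_solvable_from_net[OF ab(3) _ d F fin] by blast
  have "real d * log 2 K \<le> real d * (8 + log 2 (sqrt (1 - \<beta>) / (\<alpha> - \<beta>)))"
    unfolding K_def by (rule mult_left_mono[OF \<delta>(3)]) simp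
  then have "real l \<le> real d * log 2 (sqrt (1 - \<beta>) / (\<alpha> - \<beta>)) + 9 * real d"
    using l d by (simp add: algebra_simps)
  then show "\<exists>l. l \<ge> 1 \<and> inner_product_solvable \<alpha> \<beta> d l \<and>
      real l \<le> real d * log 2 (sqrt (1 - \<beta>) / (\<alpha> - \<beta>)) + 9 * real d"
    using \<open>l \<ge> 1\<close> \<open>inner_product_solvable \<alpha> \<beta> d l\<close> by blast
qed simp

end
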